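(* Let $A=(a_{ij})$ be a real symmetric $n\times n$ matrix with positive diagonal entries, and suppose there is $\gamma>0$ such that $a_{ii}a_{jj}\ge\gamma^2a_{ij}^2$ for all $i\ne j$. Then every eigenvalue of $A$ lies in $\bigcup_{i=1}^n B\big(a_{ii},a_{ii}(n-1)/\gamma\big)$, where $B(c,r)$ denotes the closed ball (interval) of center $c$ and radius $r$. *)

theory Defs
  imports "HOL-Analysis.Analysis"
begin

definition mat_eigenvalue :: "real^'n^'n \<Rightarrow> real \<Rightarrow> bool" where
  "mat_eigenvalue A l \<longleftrightarrow> (\<exists>v. v \<noteq> 0 \<and> A *v v = l *\<^sub>R v)"

end

theory Submission
  imports Defs
begin

text \<open>Gershgorin's argument, applied to \<open>D\<^sup>-\<^sup>1 A D\<close> with \<open>D = diag (1 / sqrt (A $ j $ j))\<close>,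
  bounds \<open>\<bar>l - A $ i $ i\<bar>\<close> for some \<open>i\<close> by
  \<open>sqrt (A $ i $ i) * (\<Sum>j\<noteq>i. \<bar>A $ i $ j\<bar> / sqrt (A $ j $ j))\<close>, and the hypothesis on
  \<open>\<gamma>\<close> makes each of the \<open>n - 1\<close> summands at most \<open>sqrt (A $ i $ i) / \<gamma>\<close>.\<close>

lemma eigenvector_row_bound:
  fixes A :: "real^'n^'n"
  assumes "A *v v = l *\<^sub>R v"
  shows "\<bar>l - A $ i $ i\<bar> * \<bar>v $ i\<bar> \<le> (\<Sum>j\<in>UNIV - {i}. \<bar>A $ i $ j\<bar> * \<bar>v $ j\<bar>)"
proof -
  have "l * v $ i = (\<Sum>j\<in>UNIV. A $ i $ j * v $ j)"
    using arg_cong[where f = "\<lambda>x. x $ i", OF assms] by (simp add: matrix_vector_mult_def)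
  also have "\<dots> = A $ i $ i * v $ i + (\<Sum>j\<in>UNIV - {i}. A $ i $ j * v $ j)"
    by (simp add: sum.remove)
  finally have "(l - A $ i $ i) * v $ i = (\<Sum>j\<in>UNIV - {i}. A $ i $ j * v $ j)"
    by (simp add: left_diff_distrib)
  then have "\<bar>l - A $ i $ i\<bar> * \<bar>v $ i\<bar> = \<bar>\<Sum>j\<in>UNIV - {i}. A $ i $ j * v $ j\<bar>"
    by (metis abs_mult)
  also have "\<dots> \<le> (\<Sum>j\<in>UNIV - {i}. \<bar>A $ i $ j\<bar> * \<bar>v $ j\<bar>)"
    unfolding abs_mult[symmetric] by (rule sum_abs)
  finally show ?thesis .
qed

text \<open>Gershgorin's theorem for \<open>D\<^sup>-\<^sup>1 A D\<close> with \<open>D = diag w\<close>, whose eigenvector is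
  \<open>D\<^sup>-\<^sup>1 v\<close>.\<close>
lemma mat_eigenvalue_weighted_Gershgorin:
  fixes A :: "real^'n^'n"
  assumes "mat_eigenvalue A l" and w_pos: "\<And>j. w j > 0"
  shows "\<exists>i. \<bar>l - A $ i $ i\<bar> * w i \<le> (\<Sum>j\<in>UNIV - {i}. \<bar>A $ i $ j\<bar> * w j)"
proof -
  obtain v where "v \<noteq> 0" and eigen: "A *v v = l *\<^sub>R v"
    using assms(1) unfolding mat_eigenvalue_def by blast
  define u where "u j = \<bar>v $ j\<bar> / w j" for j
  have v_eq: "\<bar>v $ j\<bar> = w j * u j" for j
    using w_pos[of j] by (simp add: u_def)
  have "Max (range u) \<in> range u"
    by (rule Max_in) auto
  then obtain i where "u i = Max (range u)"
    by (metis rangeE)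
  then have u_max: "u j \<le> u i" for j
    by simp
  obtain k where "v $ k \<noteq> 0"
    using \<open>v \<noteq> 0\<close> by (auto simp: vec_eq_iff)
  then have "u k > 0"
    using w_pos[of k] by (simp add: u_def)
  then have "u i > 0"
    using u_max[of k] by linarith
  have "(\<bar>l - A $ i $ i\<bar> * w i) * u i \<le> (\<Sum>j\<in>UNIV - {i}. \<bar>A $ i $ j\<bar> * w j * u j)"
    using eigenvector_row_bound[OF eigen, of i] by (simp add: v_eq mult.assoc)
  also have "\<dots> \<le> (\<Sum>j\<in>UNIV - {i}. \<bar>A $ i $ j\<bar> * w j * u i)"
    using w_pos by (intro sum_mono mult_left_mono u_max) (simp add: less_imp_le)
  also have "\<dots> = (\<Sum>j\<in>UNIV - {i}. \<bar>A $ i $ j\<bar> * w j) * u i"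
    by (simp add: sum_distrib_right)
  finally show ?thesis
    using \<open>u i > 0\<close> by (intro exI[of _ i]) simp
qed

lemma abs_le_sqrt_mult_div:
  fixes a b c \<gamma> :: real
  assumes "a > 0" "b > 0" "\<gamma> > 0" "a * b \<ge> \<gamma>\<^sup>2 * c\<^sup>2"
  shows "\<bar>c\<bar> \<le> sqrt a * sqrt b / \<gamma>"
proof -
  have "(sqrt a * sqrt b)\<^sup>2 = a * b"
    using assms(1,2) by (simp add: power_mult_distrib)
  then have "(\<gamma> * \<bar>c\<bar>)\<^sup>2 \<le> (sqrt a * sqrt b)\<^sup>2"
    using assms(4) by (simp add: power_mult_distrib)
  then have "\<gamma> * \<bar>c\<bar> \<le> sqrt a * sqrt b"
    by (rule power2_le_imp_le) (use assms(1,2) in simp)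
  then show ?thesis
    using assms(3) by (simp add: pos_le_divide_eq mult.commute)
qed

theorem theorem6p4:
  fixes A :: "real^'n^'n" and \<gamma> :: real and l :: real
  assumes "transpose A = A"
    and "\<And>i. A $ i $ i > 0"
    and "\<gamma> > 0"
    and "\<And>i j. i \<noteq> j \<Longrightarrow> A $ i $ i * A $ j $ j \<ge> \<gamma>\<^sup>2 * (A $ i $ j)\<^sup>2"
    and "mat_eigenvalue A l"
  shows "l \<in> (\<Union>i. cball (A $ i $ i) (A $ i $ i * (real CARD('n) - 1) / \<gamma>))"
proof -
  define s where "s j = sqrt (A $ j $ j)" for j
  have s_pos: "s j > 0" for j
    using assms(2) by (simp add: s_def)
  obtain i where "\<bar>l - A $ i $ i\<bar> / s i \<le> (\<Sum>j\<in>UNIV - {i}. \<bar>A $ i $ j\<bar> / s j)"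
    using mat_eigenvalue_weighted_Gershgorin[OF assms(5), of "\<lambda>j. 1 / s j"] s_pos by auto
  also have "\<dots> \<le> (\<Sum>j\<in>UNIV - {i}. s i / \<gamma>)"
  proof (rule sum_mono)
    fix j assume "j \<in> UNIV - {i}"
    then have "\<bar>A $ i $ j\<bar> \<le> s i * s j / \<gamma>"
      unfolding s_def using assms(2-4) by (intro abs_le_sqrt_mult_div) auto
    then show "\<bar>A $ i $ j\<bar> / s j \<le> s i / \<gamma>"
      using s_pos[of j] by (simp add: divide_le_eq)
  qed
  also have "\<dots> = (real CARD('n) - 1) * s i / \<gamma>"
    by (simp add: card_Diff_singleton)
  finally have "\<bar>l - A $ i $ i\<bar> \<le> s i * s i * (real CARD('n) - 1) / \<gamma>"
    using s_pos[of i] by (simp add: divide_le_eq mult_ac)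
  also have "s i * s i = A $ i $ i"
    using assms(2)[of i] by (simp add: s_def)
  finally show ?thesis
    by (auto simp: dist_real_def abs_minus_commute)
qed

end
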